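(* Let $n\ge 2$ and let $\mathbf{a}^{1},\mathbf{a}^{2}\in\mathbb{R}^{n}$ be linearly independent vectors. Let $l_{i}=\{t\mathbf{b}^{i}+\mathbf{c}^{i}:t\in\mathbb{R}\}$, $i=1,2,3$, be three distinct straight lines in $\mathbb{R}^{n}$ (so $\mathbf{b}^{i}\in\mathbb{R}^{n}\setminus\{\mathbf{0}\}$, $\mathbf{c}^{i}\in\mathbb{R}^{n}$), and let $L=l_{1}\cup l_{2}\cup l_{3}$. Then there exists a closed path $p=(\mathbf{x}^{1},\dots,\mathbf{x}^{m})$ with respect to the directions $\mathbf{a}^{1}$ and $\mathbf{a}^{2}$ such that all points of $p$ lie in $L$.
   Context: A path with respect to the directions $\mathbf{a}^{1},\mathbf{a}^{2}$ is a finite ordered tuple of points $(\mathbf{x}^{1},\dots,\mathbf{x}^{k})$ in $\mathbb{R}^{n}$ with $\mathbf{x}^{j}\neq\mathbf{x}^{j+1}$ for all $j$, such that the differences $\mathbf{x}^{j+1}-\mathbf{x}^{j}$ are perpendicular alternately to $\mathbf{a}^{1}$ and $\mathbf{a}^{2}$; i.e., for some ordering $(\mathbf{u},\mathbf{v})$ of $\{\mathbf{a}^{1},\mathbf{a}^{2}\}$ we have $\mathbf{u}\cdot\mathbf{x}^{1}=\mathbf{u}\cdot\mathbf{x}^{2}$, $\mathbf{v}\cdot\mathbf{x}^{2}=\mathbf{v}\cdot\mathbf{x}^{3}$, $\mathbf{u}\cdot\mathbf{x}^{3}=\mathbf{u}\cdot\mathbf{x}^{4}$, and so on. A tuple $(\mathbf{x}^{1},\dots,\mathbf{x}^{k})$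 is a closed path with respect to $\mathbf{a}^{1},\mathbf{a}^{2}$ if $k$ is even and $(\mathbf{x}^{1},\dots,\mathbf{x}^{k},\mathbf{x}^{1})$ is a path with respect to $\mathbf{a}^{1},\mathbf{a}^{2}$. *)

theory Defs
  imports "HOL-Analysis.Analysis"
begin

text \<open>Indices are 0-based: step j (from
xs!j to xs!(j+1)) is perpendicular to u for even j and to v for odd j.\<close>
definition path_wrt :: "real^'n \<Rightarrow> real^'n \<Rightarrow> (real^'n) list \<Rightarrow> bool" where
  "path_wrt a1 a2 xs \<longleftrightarrow>
     xs \<noteq> [] \<and>
     (\<forall>j. Suc j < length xs \<longrightarrow> xs ! j \<noteq> xs ! Suc j) \<and>
     (\<exists>u v. ((u = a1 \<and> v = a2) \<or> (u = a2 \<and> v = a1)) \<and>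
        (\<forall>j. Suc j < length xs \<longrightarrow>
           (even j \<longrightarrow> u \<bullet> xs ! j = u \<bullet> xs ! Suc j) \<and>
           (odd j \<longrightarrow> v \<bullet> xs ! j = v \<bullet> xs ! Suc j)))"

definition closed_path_wrt :: "real^'n \<Rightarrow> real^'n \<Rightarrow> (real^'n) list \<Rightarrow> bool" where
  "closed_path_wrt a1 a2 xs \<longleftrightarrow>
     xs \<noteq> [] \<and> even (length xs) \<and> path_wrt a1 a2 (xs @ [hd xs])"

definition line :: "real^'n \<Rightarrow> real^'n \<Rightarrow> (real^'n) set" where
  "line b c = {t *\<^sub>R b + c | t. True}"

end

theory Submission
  imports Defs
begin

(* Write coords a1 a2 x = (a1 \<bullet> x, a2 \<bullet> x) and draw the first coordinate horizontally,
   the second vertically. A closed path in L is then a closed rook tour (alternately horizontal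
   and vertical nonzero moves) through points of coords a1 a2 ` L, lifted back to L.
   If coords a1 a2 is not injective on L, two points of L with equal coordinates already form a
   closed path of length 2. Otherwise distinct lines of L are mapped onto distinct lines of the
   plane. If one image is horizontal, a rectangle with one horizontal side on it (and the opposite
   side between the two other images, or on a second horizontal image) does the job. If all
   images are oblique, s = k_i r + d_i, a rectangle with a diagonal on a suitable one of them
   exists unless the three are concurrent or all parallel. In that case the six-move tour
   l1, l2, l3, l1, l2, l3, l1 closes up: its return map on l1 is a translation whose shift
   vanishes exactly then. *)

definition coords :: "real^'n \<Rightarrow> real^'n \<Rightarrow> real^'n \<Rightarrow> real \<times> real" where
  "coords a1 a2 x = (a1 \<bullet> x, a2 \<bullet> x)"

definition affine_graph :: "real \<Rightarrow> real \<Rightarrow> (real \<times> real) set" where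
  "affine_graph k d = {(k * r + d, r) | r. True}"

definition closed_path_in :: "real^'n \<Rightarrow> real^'n \<Rightarrow> (real^'n) set \<Rightarrow> bool" where
  "closed_path_in a1 a2 L \<longleftrightarrow> (\<exists>p. closed_path_wrt a1 a2 p \<and> set p \<subseteq> L)"

lemma closed_path_wrt_pair:
  assumes "x \<noteq> y" "a1 \<bullet> x = a1 \<bullet> y" "a2 \<bullet> x = a2 \<bullet> y"
  shows "closed_path_wrt a1 a2 [x, y]"
  using assms unfolding closed_path_wrt_def path_wrt_def
  by (simp add: less_Suc_eq nth_Cons') (rule exI[of _ a1], rule exI[of _ a2], simp)

lemma closed_path_wrt_rectangle:
  assumes "x0 \<noteq> x1" "x1 \<noteq> x2" "x2 \<noteq> x3" "x3 \<noteq> x0"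
    and "a2 \<bullet> x0 = a2 \<bullet> x1" "a1 \<bullet> x1 = a1 \<bullet> x2" "a2 \<bullet> x2 = a2 \<bullet> x3" "a1 \<bullet> x3 = a1 \<bullet> x0"
  shows "closed_path_wrt a1 a2 [x0, x1, x2, x3]"
  using assms unfolding closed_path_wrt_def path_wrt_def
  by (simp add: less_Suc_eq nth_Cons') (rule exI[of _ a2], rule exI[of _ a1], simp)

lemma closed_path_wrt_hexagon:
  assumes "x0 \<noteq> x1" "x1 \<noteq> x2" "x2 \<noteq> x3" "x3 \<noteq> x4" "x4 \<noteq> x5" "x5 \<noteq> x0"
    and "a2 \<bullet> x0 = a2 \<bullet> x1" "a1 \<bullet> x1 = a1 \<bullet> x2" "a2 \<bullet> x2 = a2 \<bullet> x3"
    and "a1 \<bullet> x3 = a1 \<bullet> x4" "a2 \<bullet> x4 = a2 \<bullet> x5" "a1 \<bullet> x5 = a1 \<bullet> x0"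
  shows "closed_path_wrt a1 a2 [x0, x1, x2, x3, x4, x5]"
  using assms unfolding closed_path_wrt_def path_wrt_def
  by (simp add: less_Suc_eq nth_Cons') (rule exI[of _ a2], rule exI[of _ a1], simp)

lemma path_wrt_swap: "path_wrt a2 a1 xs = path_wrt a1 a2 xs"
  unfolding path_wrt_def by (simp add: disj_commute)

lemma closed_path_in_swap: "closed_path_in a2 a1 L = closed_path_in a1 a2 L"
  by (simp add: closed_path_in_def closed_path_wrt_def path_wrt_swap)

lemma inj_on_coords_swap: "inj_on (coords a2 a1) L = inj_on (coords a1 a2) L"
  unfolding inj_on_def coords_def by auto

lemma closed_path_in_if_not_inj_on:
  assumes "\<not> inj_on (coords a1 a2) L"
  shows "closed_path_in a1 a2 L"
proof -
  obtain x y where "x \<in> L" "y \<in> L" "x \<noteq> y" "a1 \<bullet> x = a1 \<bullet> y" "a2 \<bullet> x = a2 \<bullet> y"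
    using assms unfolding inj_on_def coords_def by auto
  then show ?thesis
    unfolding closed_path_in_def using closed_path_wrt_pair[of x y a1 a2] by auto
qed

lemma inner_ne_zero_if_inj_on_line:
  assumes "inj_on (coords a1 a2) (line b c)" and "b \<noteq> 0"
  shows "a1 \<bullet> b \<noteq> 0 \<or> a2 \<bullet> b \<noteq> 0"
proof (rule ccontr)
  assume "\<not> (a1 \<bullet> b \<noteq> 0 \<or> a2 \<bullet> b \<noteq> 0)"
  then have "coords a1 a2 (1 *\<^sub>R b + c) = coords a1 a2 (0 *\<^sub>R b + c)"
    by (simp add: coords_def inner_add_right)
  moreover have "t *\<^sub>R b + c \<in> line b c" for t
    unfolding line_def by blast
  ultimately have "1 *\<^sub>R b + c = 0 *\<^sub>R b + c"
    using assms(1) by (blast dest: inj_onD)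
  with assms(2) show False by simp
qed

lemma coords_image_line:
  assumes "a' \<bullet> b \<noteq> 0"
  obtains k d where "coords a a' ` line b c = affine_graph k d" and "k = 0 \<longleftrightarrow> a \<bullet> b = 0"
proof
  define k where "k = (a \<bullet> b) / (a' \<bullet> b)"
  define d where "d = a \<bullet> c - k * (a' \<bullet> c)"
  have point: "coords a a' (t *\<^sub>R b + c) = (k * r + d, r)" if "r = t * (a' \<bullet> b) + a' \<bullet> c" for t r
    using assms that by (simp add: coords_def k_def d_def inner_add_right field_simps)
  have level: "r = ((r - a' \<bullet> c) / (a' \<bullet> b)) * (a' \<bullet> b) + a' \<bullet> c" for r
    using assms by simp
  show "coords a a' ` line b c = affine_graph k d"
  proof (intro equalityI subsetI)
    fix p
    assume "p \<in> coords a a' ` line b c"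
    then obtain t where "p = coords a a' (t *\<^sub>R b + c)"
      unfolding line_def by auto
    then show "p \<in> affine_graph k d"
      unfolding affine_graph_def using point[OF refl] by auto
  next
    fix p
    assume "p \<in> affine_graph k d"
    then obtain r where "p = (k * r + d, r)"
      unfolding affine_graph_def by auto
    then have "p = coords a a' (((r - a' \<bullet> c) / (a' \<bullet> b)) *\<^sub>R b + c)"
      using point[OF level] by simp
    then show "p \<in> coords a a' ` line b c"
      unfolding line_def by auto
  qed
  show "k = 0 \<longleftrightarrow> a \<bullet> b = 0"
    using assms by (simp add: k_def)
qed

lemma inj_on_image_neq:
  assumes "inj_on f L" "A \<subseteq> L" "B \<subseteq> L" "A \<noteq> B"
  shows "f ` A \<noteq> f ` B"
  using assms inj_on_Un_image_eq_iff inj_on_subset by (metis Un_subset_iff)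

lemma affine_graph_subset_imageE:
  assumes "affine_graph k d \<subseteq> coords a1 a2 ` L"
  obtains x where "x \<in> L" "a1 \<bullet> x = k * r + d" "a2 \<bullet> x = r"
proof -
  have "(k * r + d, r) \<in> coords a1 a2 ` L"
    using assms unfolding affine_graph_def by blast
  then show ?thesis
    using that unfolding coords_def by auto
qed

lemma finite_affine_coincidences:
  fixes k d k' d' :: real
  assumes "(k, d) \<noteq> (k', d')"
  shows "finite {h. k * h + d = k' * h + d'}"
proof (cases "k = k'")
  case True
  then show ?thesis using assms by simp
next
  case False
  then have "{h. k * h + d = k' * h + d'} \<subseteq> {(d' - d) / (k - k')}"
    by (auto simp: field_simps)
  then show ?thesis by (rule finite_subset) simp
qed

lemma closed_path_in_two_horizontal_graphs:
  assumes "affine_graph 0 \<rho>1 \<subseteq> coords a2 a1 ` L" and "affine_graph 0 \<rho>2 \<subseteq> coords a2 a1 ` L"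
    and "\<rho>1 \<noteq> \<rho>2"
  shows "closed_path_in a1 a2 L"
proof -
  obtain x0 where x0: "x0 \<in> L" "a2 \<bullet> x0 = \<rho>1" "a1 \<bullet> x0 = 0"
    using affine_graph_subset_imageE[OF assms(1), of 0] by auto
  obtain x1 where x1: "x1 \<in> L" "a2 \<bullet> x1 = \<rho>1" "a1 \<bullet> x1 = 1"
    using affine_graph_subset_imageE[OF assms(1), of 1] by auto
  obtain x2 where x2: "x2 \<in> L" "a2 \<bullet> x2 = \<rho>2" "a1 \<bullet> x2 = 1"
    using affine_graph_subset_imageE[OF assms(2), of 1] by auto
  obtain x3 where x3: "x3 \<in> L" "a2 \<bullet> x3 = \<rho>2" "a1 \<bullet> x3 = 0"
    using affine_graph_subset_imageE[OF assms(2), of 0] by auto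
  have "closed_path_wrt a1 a2 [x0, x1, x2, x3]"
    by (rule closed_path_wrt_rectangle) (use assms(3) x0 x1 x2 x3 in auto)
  with x0(1) x1(1) x2(1) x3(1) show ?thesis
    unfolding closed_path_in_def by auto
qed

lemma closed_path_in_horizontal_and_two_graphs:
  assumes "affine_graph 0 \<rho> \<subseteq> coords a2 a1 ` L"
    and "affine_graph k2 d2 \<subseteq> coords a1 a2 ` L" and "affine_graph k3 d3 \<subseteq> coords a1 a2 ` L"
    and "(k2, d2) \<noteq> (k3, d3)"
  shows "closed_path_in a1 a2 L"
proof -
  have "finite (insert \<rho> {r. k2 * r + d2 = k3 * r + d3})"
    using finite_affine_coincidences[OF assms(4)] by simp
  then obtain r where "r \<notin> insert \<rho> {r. k2 * r + d2 = k3 * r + d3}"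
    using ex_new_if_finite[OF infinite_UNIV_char_0] by metis
  then have r: "r \<noteq> \<rho>" "k2 * r + d2 \<noteq> k3 * r + d3" by auto
  obtain x0 where x0: "x0 \<in> L" "a2 \<bullet> x0 = \<rho>" "a1 \<bullet> x0 = k3 * r + d3"
    using affine_graph_subset_imageE[OF assms(1), of "k3 * r + d3"] by auto
  obtain x1 where x1: "x1 \<in> L" "a2 \<bullet> x1 = \<rho>" "a1 \<bullet> x1 = k2 * r + d2"
    using affine_graph_subset_imageE[OF assms(1), of "k2 * r + d2"] by auto
  obtain x2 where x2: "x2 \<in> L" "a1 \<bullet> x2 = k2 * r + d2" "a2 \<bullet> x2 = r"
    by (rule affine_graph_subset_imageE[OF assms(2)])
  obtain x3 where x3: "x3 \<in> L" "a1 \<bullet> x3 = k3 * r + d3" "a2 \<bullet> x3 = r"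
    by (rule affine_graph_subset_imageE[OF assms(3)])
  have "closed_path_wrt a1 a2 [x0, x1, x2, x3]"
    by (rule closed_path_wrt_rectangle) (use r x0 x1 x2 x3 in auto)
  with x0(1) x1(1) x2(1) x3(1) show ?thesis
    unfolding closed_path_in_def by auto
qed

lemma closed_path_in_three_graphs_rectangle:
  assumes "affine_graph k1 d1 \<subseteq> coords a1 a2 ` L" and "affine_graph k2 d2 \<subseteq> coords a1 a2 ` L"
    and "affine_graph k3 d3 \<subseteq> coords a1 a2 ` L"
    and "k1 \<noteq> 0" and "k1\<^sup>2 \<noteq> k2 * k3"
    and general_position: "k1 * (d2 - d3) + k2 * (d3 - d1) + k3 * (d1 - d2) \<noteq> 0"
  shows "closed_path_in a1 a2 L"
proof -
  define D where "D = k1\<^sup>2 - k2 * k3"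
  define r1 where "r1 = (k1 * (d3 - d1) + k3 * (d2 - d1)) / D"
  define r2 where "r2 = (k1 * (d2 - d1) + k2 * (d3 - d1)) / D"
  have "D \<noteq> 0" using assms(5) by (simp add: D_def)
  then have e1: "k2 * r1 + d2 = k1 * r2 + d1" and e2: "k3 * r2 + d3 = k1 * r1 + d1"
    unfolding r1_def r2_def D_def by (simp_all add: field_simps power2_eq_square; simp add: algebra_simps)+
  have "r1 \<noteq> r2"
  proof
    assume "r1 = r2"
    then have d2: "d2 = (k1 - k2) * r1 + d1" and d3: "d3 = (k1 - k3) * r1 + d1"
      using e1 e2 by (simp_all add: algebra_simps)
    have "k1 * (d2 - d3) + k2 * (d3 - d1) + k3 * (d1 - d2) = 0"
      unfolding d2 d3 by (simp add: algebra_simps)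
    with general_position show False by simp
  qed
  obtain x0 where x0: "x0 \<in> L" "a1 \<bullet> x0 = k1 * r1 + d1" "a2 \<bullet> x0 = r1"
    by (rule affine_graph_subset_imageE[OF assms(1)])
  obtain x1 where x1: "x1 \<in> L" "a1 \<bullet> x1 = k2 * r1 + d2" "a2 \<bullet> x1 = r1"
    by (rule affine_graph_subset_imageE[OF assms(2)])
  obtain x2 where x2: "x2 \<in> L" "a1 \<bullet> x2 = k1 * r2 + d1" "a2 \<bullet> x2 = r2"
    by (rule affine_graph_subset_imageE[OF assms(1)])
  obtain x3 where x3: "x3 \<in> L" "a1 \<bullet> x3 = k3 * r2 + d3" "a2 \<bullet> x3 = r2"
    by (rule affine_graph_subset_imageE[OF assms(3)])
  have "closed_path_wrt a1 a2 [x0, x1, x2, x3]"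
    by (rule closed_path_wrt_rectangle) (use \<open>r1 \<noteq> r2\<close> \<open>k1 \<noteq> 0\<close> e1 e2 x0 x1 x2 x3 in auto)
  with x0(1) x1(1) x2(1) x3(1) show ?thesis
    unfolding closed_path_in_def by auto
qed

lemma closed_path_in_graph_hexagon:
  assumes "affine_graph k1 d1 \<subseteq> coords a1 a2 ` L" and "affine_graph k2 d2 \<subseteq> coords a1 a2 ` L"
    and "affine_graph k3 d3 \<subseteq> coords a1 a2 ` L"
    and e1: "k2 * h0 + d2 = k3 * h2 + d3" and e2: "k1 * h2 + d1 = k2 * h4 + d2"
    and e3: "k3 * h4 + d3 = k1 * h0 + d1"
    and "k1 * h0 + d1 \<noteq> k2 * h0 + d2" "k3 * h2 + d3 \<noteq> k1 * h2 + d1" "k2 * h4 + d2 \<noteq> k3 * h4 + d3"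
    and "h0 \<noteq> h2" "h2 \<noteq> h4" "h4 \<noteq> h0"
  shows "closed_path_in a1 a2 L"
proof -
  obtain x0 where x0: "x0 \<in> L" "a1 \<bullet> x0 = k1 * h0 + d1" "a2 \<bullet> x0 = h0"
    by (rule affine_graph_subset_imageE[OF assms(1)])
  obtain x1 where x1: "x1 \<in> L" "a1 \<bullet> x1 = k2 * h0 + d2" "a2 \<bullet> x1 = h0"
    by (rule affine_graph_subset_imageE[OF assms(2)])
  obtain x2 where x2: "x2 \<in> L" "a1 \<bullet> x2 = k3 * h2 + d3" "a2 \<bullet> x2 = h2"
    by (rule affine_graph_subset_imageE[OF assms(3)])
  obtain x3 where x3: "x3 \<in> L" "a1 \<bullet> x3 = k1 * h2 + d1" "a2 \<bullet> x3 = h2"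
    by (rule affine_graph_subset_imageE[OF assms(1)])
  obtain x4 where x4: "x4 \<in> L" "a1 \<bullet> x4 = k2 * h4 + d2" "a2 \<bullet> x4 = h4"
    by (rule affine_graph_subset_imageE[OF assms(2)])
  obtain x5 where x5: "x5 \<in> L" "a1 \<bullet> x5 = k3 * h4 + d3" "a2 \<bullet> x5 = h4"
    by (rule affine_graph_subset_imageE[OF assms(3)])
  have "x0 \<noteq> x1" using x0(2) x1(2) assms(7) by auto
  moreover have "x1 \<noteq> x2" using x1(3) x2(3) assms(10) by auto
  moreover have "x2 \<noteq> x3" using x2(2) x3(2) assms(8) by auto
  moreover have "x3 \<noteq> x4" using x3(3) x4(3) assms(11) by auto
  moreover have "x4 \<noteq> x5" using x4(2) x5(2) assms(9) by auto
  moreover have "x5 \<noteq> x0" using x5(3) x0(3) assms(12) by auto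
  moreover have "a2 \<bullet> x0 = a2 \<bullet> x1" "a1 \<bullet> x1 = a1 \<bullet> x2" "a2 \<bullet> x2 = a2 \<bullet> x3"
    "a1 \<bullet> x3 = a1 \<bullet> x4" "a2 \<bullet> x4 = a2 \<bullet> x5" "a1 \<bullet> x5 = a1 \<bullet> x0"
    using e1 e2 e3 x0 x1 x2 x3 x4 x5 by simp_all
  ultimately have "closed_path_wrt a1 a2 [x0, x1, x2, x3, x4, x5]"
    by (rule closed_path_wrt_hexagon)
  with x0(1) x1(1) x2(1) x3(1) x4(1) x5(1) show ?thesis
    unfolding closed_path_in_def by auto
qed

lemma closed_path_in_three_graphs_hexagon:
  assumes "affine_graph k1 d1 \<subseteq> coords a1 a2 ` L" and "affine_graph k2 d2 \<subseteq> coords a1 a2 ` L"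
    and "affine_graph k3 d3 \<subseteq> coords a1 a2 ` L"
    and "k1 \<noteq> 0" "k2 \<noteq> 0" "k3 \<noteq> 0"
    and "(k1, d1) \<noteq> (k2, d2)" "(k2, d2) \<noteq> (k3, d3)" "(k3, d3) \<noteq> (k1, d1)"
    and concurrent_or_parallel: "k1 * (d2 - d3) + k2 * (d3 - d1) + k3 * (d1 - d2) = 0"
  shows "closed_path_in a1 a2 L"
proof -
  define C12 where "C12 = {h. k1 * h + d1 = k2 * h + d2}"
  define C23 where "C23 = {h. k2 * h + d2 = k3 * h + d3}"
  define C31 where "C31 = {h. k3 * h + d3 = k1 * h + d1}"
  \<comment> \<open>g and g' give the second coordinate after a vertical move from l2 to l3, resp. from l1 to l2\<close>
  define g where "g h = (k2 * h + d2 - d3) / k3" for h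
  define g' where "g' h = (k1 * h + d1 - d2) / k2" for h
  have inj: "inj g" "inj g'"
    unfolding g_def g'_def inj_def using assms(4-6) by simp_all
  have fin: "finite C12" "finite C23" "finite C31"
    unfolding C12_def C23_def C31_def using finite_affine_coincidences assms(7-9) by simp_all
  have "finite (C12 \<union> C23 \<union> C31 \<union> g -` (C31 \<union> C12) \<union> g -` g' -` C23)"
    by (intro finite_UnI finite_vimageI) (simp_all only: inj fin)
  \<comment> \<open>h0 avoids the finitely many second coordinates at which two consecutive vertices would coincide\<close>
  then obtain h0 where h0: "h0 \<notin> C12 \<union> C23 \<union> C31 \<union> g -` (C31 \<union> C12) \<union> g -` g' -` C23"
    using ex_new_if_finite[OF infinite_UNIV_char_0] by metis
  define h2 where "h2 = g h0"
  define h4 where "h4 = g' h2"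
  have e1: "k2 * h0 + d2 = k3 * h2 + d3" and e2: "k1 * h2 + d1 = k2 * h4 + d2"
    unfolding h2_def h4_def g_def g'_def using assms(5,6) by simp_all
  have "k2 * (k3 * h4 + d3) = k3 * (k1 * h2 + d1 - d2) + k2 * d3"
    using e2 by (simp add: algebra_simps)
  also have "\<dots> = k1 * (k2 * h0 + d2 - d3) + k3 * (d1 - d2) + k2 * d3"
    using e1 by (simp add: algebra_simps)
  also have "\<dots> = k2 * (k1 * h0 + d1) + (k1 * (d2 - d3) + k2 * (d3 - d1) + k3 * (d1 - d2))"
    by (simp add: algebra_simps)
  \<comment> \<open>the tour closes up because the lines are concurrent or parallel\<close>
  finally have e3: "k3 * h4 + d3 = k1 * h0 + d1"
    using concurrent_or_parallel assms(5) by simp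
  have "h0 \<notin> C12" "h0 \<notin> C23" "h0 \<notin> C31" "h2 \<notin> C31" "h2 \<notin> C12" "h4 \<notin> C23"
    using h0 unfolding h2_def h4_def by auto
  then show ?thesis
    unfolding C12_def C23_def C31_def
    by (intro closed_path_in_graph_hexagon[OF assms(1-3) e1 e2 e3]) (use e1 e2 e3 in auto)
qed

lemma eq_if_squares_eq_products:
  fixes k1 k2 k3 :: real
  assumes "k1 \<noteq> 0" and "k1\<^sup>2 = k2 * k3" and "k2\<^sup>2 = k1 * k3"
  shows "k1 = k2 \<and> k2 = k3"
proof -
  have "(k1 - k2) * (k1 + k2 + k3) = 0"
    using assms(2,3) by algebra
  moreover have "k1 + k2 + k3 \<noteq> 0"
  proof
    assume "k1 + k2 + k3 = 0"
    with assms(2) have "(k1 + 2 * k2)\<^sup>2 + 3 * k1\<^sup>2 = 0"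
      by algebra
    moreover have "(k1 + 2 * k2)\<^sup>2 + 3 * k1\<^sup>2 > 0"
      using assms(1) by (intro add_nonneg_pos) simp_all
    ultimately show False by simp
  qed
  ultimately have "k1 = k2" by simp
  with assms(1,2) show ?thesis
    by (simp add: power2_eq_square)
qed

lemma closed_path_in_three_graphs:
  assumes "affine_graph k1 d1 \<subseteq> coords a1 a2 ` L" and "affine_graph k2 d2 \<subseteq> coords a1 a2 ` L"
    and "affine_graph k3 d3 \<subseteq> coords a1 a2 ` L"
    and "k1 \<noteq> 0" "k2 \<noteq> 0" "k3 \<noteq> 0"
    and "(k1, d1) \<noteq> (k2, d2)" "(k2, d2) \<noteq> (k3, d3)" "(k3, d3) \<noteq> (k1, d1)"
  shows "closed_path_in a1 a2 L"
proof (cases "k1 * (d2 - d3) + k2 * (d3 - d1) + k3 * (d1 - d2) = 0")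
  case True
  with assms show ?thesis by (rule closed_path_in_three_graphs_hexagon)
next
  case general_position: False
  consider "k1\<^sup>2 \<noteq> k2 * k3" | "k2\<^sup>2 \<noteq> k1 * k3" | "k1\<^sup>2 = k2 * k3" "k2\<^sup>2 = k1 * k3"
    by blast
  then show ?thesis
  proof cases
    case 1
    with assms(1-4) show ?thesis
      using general_position by (rule closed_path_in_three_graphs_rectangle)
  next
    case 2
    moreover have "k2 * (d1 - d3) + k1 * (d3 - d2) + k3 * (d2 - d1) \<noteq> 0"
      using general_position by (simp add: algebra_simps)
    ultimately show ?thesis
      using closed_path_in_three_graphs_rectangle[OF assms(2,1,3,5)] by (simp add: mult.commute)
  next
    case 3
    then have "k1 = k2 \<and> k2 = k3" using eq_if_squares_eq_products assms(4) by blast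
    with general_position show ?thesis by (simp add: algebra_simps)
  qed
qed

lemma closed_path_in_two_horizontal_lines:
  assumes inj: "inj_on (coords a1 a2) L"
    and "line b1 c1 \<subseteq> L" "line b2 c2 \<subseteq> L" "line b1 c1 \<noteq> line b2 c2"
    and "b1 \<noteq> 0" "b2 \<noteq> 0" "a2 \<bullet> b1 = 0" "a2 \<bullet> b2 = 0"
  shows "closed_path_in a1 a2 L"
proof -
  have inj': "inj_on (coords a2 a1) L"
    using inj by (simp add: inj_on_coords_swap)
  have "a1 \<bullet> b1 \<noteq> 0" "a1 \<bullet> b2 \<noteq> 0"
    using inner_ne_zero_if_inj_on_line inj_on_subset[OF inj] assms(2,3,5-8) by blast+
  then obtain \<rho>1 \<rho>2 where
    "coords a2 a1 ` line b1 c1 = affine_graph 0 \<rho>1" "coords a2 a1 ` line b2 c2 = affine_graph 0 \<rho>2"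
    using coords_image_line[where a=a2 and a'=a1] assms(7,8) by metis
  moreover have "coords a2 a1 ` line b1 c1 \<noteq> coords a2 a1 ` line b2 c2"
    using inj_on_image_neq[OF inj' assms(2-4)] .
  ultimately show ?thesis
    using closed_path_in_two_horizontal_graphs image_mono[OF assms(2)] image_mono[OF assms(3)]
    by metis
qed

lemma closed_path_in_first_line_horizontal:
  assumes inj: "inj_on (coords a1 a2) L"
    and "line b1 c1 \<subseteq> L" "line b2 c2 \<subseteq> L" "line b3 c3 \<subseteq> L"
    and "b1 \<noteq> 0" "b2 \<noteq> 0" "b3 \<noteq> 0"
    and "line b1 c1 \<noteq> line b2 c2" "line b1 c1 \<noteq> line b3 c3" "line b2 c2 \<noteq> line b3 c3"
    and "a2 \<bullet> b1 = 0"
  shows "closed_path_in a1 a2 L"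
proof (cases "a2 \<bullet> b2 = 0 \<or> a2 \<bullet> b3 = 0")
  case True
  then show ?thesis
    using closed_path_in_two_horizontal_lines[OF inj] assms(2-9,11) by metis
next
  case False
  have "a1 \<bullet> b1 \<noteq> 0"
    using inner_ne_zero_if_inj_on_line inj_on_subset[OF inj] assms(2,5,11) by blast
  then obtain \<rho> where "coords a2 a1 ` line b1 c1 = affine_graph 0 \<rho>"
    using coords_image_line[where a=a2 and a'=a1] assms(11) by metis
  moreover obtain k2 d2 k3 d3 where
    "coords a1 a2 ` line b2 c2 = affine_graph k2 d2" "coords a1 a2 ` line b3 c3 = affine_graph k3 d3"
    using coords_image_line False by metis
  moreover have "coords a1 a2 ` line b2 c2 \<noteq> coords a1 a2 ` line b3 c3"
    using inj_on_image_neq[OF inj assms(3,4,10)] .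
  ultimately show ?thesis
    using closed_path_in_horizontal_and_two_graphs image_mono[OF assms(2)] image_mono[OF assms(3)]
      image_mono[OF assms(4)]
    by (metis prod.inject)
qed

lemma closed_path_in_oblique_lines:
  assumes inj: "inj_on (coords a1 a2) L"
    and "line b1 c1 \<subseteq> L" "line b2 c2 \<subseteq> L" "line b3 c3 \<subseteq> L"
    and "line b1 c1 \<noteq> line b2 c2" "line b1 c1 \<noteq> line b3 c3" "line b2 c2 \<noteq> line b3 c3"
    and "a1 \<bullet> b1 \<noteq> 0" "a1 \<bullet> b2 \<noteq> 0" "a1 \<bullet> b3 \<noteq> 0"
    and "a2 \<bullet> b1 \<noteq> 0" "a2 \<bullet> b2 \<noteq> 0" "a2 \<bullet> b3 \<noteq> 0"
  shows "closed_path_in a1 a2 L"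
proof -
  obtain k1 d1 k2 d2 k3 d3 where graphs:
    "coords a1 a2 ` line b1 c1 = affine_graph k1 d1" "k1 \<noteq> 0"
    "coords a1 a2 ` line b2 c2 = affine_graph k2 d2" "k2 \<noteq> 0"
    "coords a1 a2 ` line b3 c3 = affine_graph k3 d3" "k3 \<noteq> 0"
    using coords_image_line assms(8-13) by metis
  have "coords a1 a2 ` line b1 c1 \<noteq> coords a1 a2 ` line b2 c2"
    "coords a1 a2 ` line b2 c2 \<noteq> coords a1 a2 ` line b3 c3"
    "coords a1 a2 ` line b3 c3 \<noteq> coords a1 a2 ` line b1 c1"
    using inj_on_image_neq[OF inj] assms(2-7) by metis+
  then have "(k1, d1) \<noteq> (k2, d2)" "(k2, d2) \<noteq> (k3, d3)" "(k3, d3) \<noteq> (k1, d1)"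
    using graphs by auto
  then show ?thesis
    using closed_path_in_three_graphs graphs image_mono[OF assms(2)] image_mono[OF assms(3)]
      image_mono[OF assms(4)]
    by metis
qed

lemma closed_path_in_some_line_horizontal:
  assumes inj: "inj_on (coords a1 a2) L"
    and lines: "line b1 c1 \<subseteq> L" "line b2 c2 \<subseteq> L" "line b3 c3 \<subseteq> L"
    and "b1 \<noteq> 0" "b2 \<noteq> 0" "b3 \<noteq> 0"
    and "line b1 c1 \<noteq> line b2 c2" "line b1 c1 \<noteq> line b3 c3" "line b2 c2 \<noteq> line b3 c3"
    and "a2 \<bullet> b1 = 0 \<or> a2 \<bullet> b2 = 0 \<or> a2 \<bullet> b3 = 0"
  shows "closed_path_in a1 a2 L"
  using assms(11)
proof (elim disjE)
  assume "a2 \<bullet> b1 = 0"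
  show ?thesis
    by (rule closed_path_in_first_line_horizontal[OF inj lines]) (use assms \<open>a2 \<bullet> b1 = 0\<close> in auto)
next
  assume "a2 \<bullet> b2 = 0"
  show ?thesis
    by (rule closed_path_in_first_line_horizontal[OF inj lines(2,1,3)]) (use assms \<open>a2 \<bullet> b2 = 0\<close> in auto)
next
  assume "a2 \<bullet> b3 = 0"
  show ?thesis
    by (rule closed_path_in_first_line_horizontal[OF inj lines(3,1,2)]) (use assms \<open>a2 \<bullet> b3 = 0\<close> in auto)
qed

theorem theorem2p1:
  fixes a1 a2 b1 b2 b3 c1 c2 c3 :: "real^'n"
  assumes "CARD('n) \<ge> 2"
    and "a1 \<noteq> a2" and "independent {a1, a2}"
    and "b1 \<noteq> 0" and "b2 \<noteq> 0" and "b3 \<noteq> 0"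
    and "line b1 c1 \<noteq> line b2 c2" and "line b1 c1 \<noteq> line b3 c3"
    and "line b2 c2 \<noteq> line b3 c3"
  shows "\<exists>p. closed_path_wrt a1 a2 p \<and>
           set p \<subseteq> line b1 c1 \<union> line b2 c2 \<union> line b3 c3"
proof -
  define L where "L = line b1 c1 \<union> line b2 c2 \<union> line b3 c3"
  have lines: "line b1 c1 \<subseteq> L" "line b2 c2 \<subseteq> L" "line b3 c3 \<subseteq> L"
    unfolding L_def by auto
  have "closed_path_in a1 a2 L"
  proof (cases "inj_on (coords a1 a2) L")
    case False
    then show ?thesis by (rule closed_path_in_if_not_inj_on)
  next
    case inj: True
    then have inj': "inj_on (coords a2 a1) L"
      by (simp add: inj_on_coords_swap)
    consider "a2 \<bullet> b1 = 0 \<or> a2 \<bullet> b2 = 0 \<or> a2 \<bullet> b3 = 0"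
      | "a1 \<bullet> b1 = 0 \<or> a1 \<bullet> b2 = 0 \<or> a1 \<bullet> b3 = 0"
      | "a1 \<bullet> b1 \<noteq> 0" "a1 \<bullet> b2 \<noteq> 0" "a1 \<bullet> b3 \<noteq> 0"
        "a2 \<bullet> b1 \<noteq> 0" "a2 \<bullet> b2 \<noteq> 0" "a2 \<bullet> b3 \<noteq> 0"
      by blast
    then show ?thesis
    proof cases
      case 1
      then show ?thesis
        by (rule closed_path_in_some_line_horizontal[OF inj lines assms(4-9)])
    next
      case 2
      then show ?thesis
        using closed_path_in_some_line_horizontal[OF inj' lines assms(4-9)]
        by (simp add: closed_path_in_swap)
    next
      case 3
      then show ?thesis
        using closed_path_in_oblique_lines[OF inj lines assms(7-9)] by blast
    qed
  qed
  then show ?thesis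
    unfolding closed_path_in_def L_def .
qed

end
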